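(* $\operatorname{Spec}(32_{65})\subseteq\{11,12,13,\dots\}\cup\{\omega\}$.
   Context: $32_{65}$ is the finite integral symmetric relation algebra with atoms $1'$, $a$, $b$, $c$, all symmetric, in which a diversity cycle $xyz$ (with $x,y,z\in\{a,b,c\}$) is mandatory (i.e. $x;y\ge z$) if it involves $a$ and forbidden (i.e. $x;y\cdot z=0$) otherwise. A representation over a set $U$ is an embedding into the full relation algebra $\langle\mathcal P(U\times U),\cup,{}^c,\circ,{}^{-1},\mathrm{Id}_U\rangle$. $\operatorname{Spec}(A)$ is the set of cardinals $\alpha\le\omega$ such that $A$ has a representation over a set of cardinality $\alpha$. *)

theory Defs
  imports Main
begin

text \<open>Elements of the algebra are
  sets of atoms (the algebra is finite and atomic).\<close>

datatype atom = Ident | At_a | At_b | At_c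

definition diversity :: "atom set" where
  "diversity = {At_a, At_b, At_c}"

text \<open>A diversity cycle xyz is mandatory (x;y \<ge> z) iff it involves a, forbidden otherwise.\<close>
definition cycle_ok :: "atom \<Rightarrow> atom \<Rightarrow> atom \<Rightarrow> bool" where
  "cycle_ok x y z \<longleftrightarrow> At_a \<in> {x, y, z}"

text \<open>Composition of atoms (all atoms are symmetric, so x;x \<ge> 1' for diversity x).\<close>
definition atom_comp :: "atom \<Rightarrow> atom \<Rightarrow> atom set" where
  "atom_comp x y =
     (if x = Ident then {y}
      else if y = Ident then {x}
      else {z. (z = Ident \<and> x = y) \<or> (z \<in> diversity \<and> cycle_ok x y z)})"

definition ra_comp :: "atom set \<Rightarrow> atom set \<Rightarrow> atom set" where
  "ra_comp X Y = (\<Union>x\<in>X. \<Union>y\<in>Y. atom_comp x y)"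

definition ra_conv :: "atom set \<Rightarrow> atom set" where
  "ra_conv X = X"   \<comment> \<open>all atoms symmetric\<close>

definition ra_one :: "atom set" where
  "ra_one = {Ident}"

definition representation :: "'u set \<Rightarrow> (atom set \<Rightarrow> ('u \<times> 'u) set) \<Rightarrow> bool" where
  "representation U h \<longleftrightarrow>
     inj h \<and>
     (\<forall>X Y. h (X \<union> Y) = h X \<union> h Y) \<and>
     (\<forall>X. h (- X) = (U \<times> U) - h X) \<and>
     (\<forall>X Y. h (ra_comp X Y) = h X O h Y) \<and>
     (\<forall>X. h (ra_conv X) = (h X)\<inverse>) \<and>
     h ra_one = Id_on U"

definition representable_over :: "'u set \<Rightarrow> bool" where
  "representable_over U \<longleftrightarrow> (\<exists>h. representation U h)"

end

theory Submission
  imports Defs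
begin

text \<open>In a representation write A, B, C for the images of the diversity atoms and
  G = B \<union> C.  The composition table makes G triangle-free and gives every A-edge p q at
  least four common G-neighbours, one for each of the colour patterns BB, CC, BC, CB of
  the path p w q.  If p A z, p A z' and z B z', the common G-neighbours of p, z and of
  p, z' are disjoint (a shared one would close a G-triangle with z z'), so together with
  p, z, z' there are at least 11 points.  With fewer points, any A-neighbour and any
  B-neighbour of a common point are G-adjacent; applied to x B y, x A w A y and w B u
  this makes x y u a G-triangle.\<close>

lemma representation_mono:
  assumes "representation U h" and "X \<subseteq> Y"
  shows "h X \<subseteq> h Y"
  using assms unfolding representation_def by (metis Un_upper1 subset_Un_eq)

lemma representation_disjoint:
  assumes "representation U h" and "X \<inter> Y = {}"
  shows "h X \<inter> h Y = {}"
proof -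
  have "h X \<subseteq> h (- Y)"
    using assms by (intro representation_mono) auto
  then show ?thesis
    using assms(1) unfolding representation_def by blast
qed

lemma representation_empty:
  assumes "representation U h"
  shows "h {} = {}"
  using representation_disjoint[OF assms, of "{}" "{}"] by simp

lemma representation_UNIV:
  assumes "representation U h"
  shows "h UNIV = U \<times> U"
  using assms representation_empty[OF assms] unfolding representation_def
  by (metis Compl_empty_eq Diff_empty)

lemma representation_nonempty:
  assumes "representation U h"
  shows "U \<noteq> {}"
proof
  assume "U = {}"
  then have "h UNIV = h {}"
    using representation_UNIV[OF assms] representation_empty[OF assms] by simp
  then show False
    using assms unfolding representation_def by (metis empty_not_UNIV injD)
qed

lemma representation_Un:
  assumes "representation U h"
  shows "h (X \<union> Y) = h X \<union> h Y"
  using assms unfolding representation_def by blast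

lemma representation_sym:
  assumes "representation U h"
  shows "sym (h X)"
  using assms unfolding representation_def ra_conv_def by (metis sym_conv_converse_eq)

lemma atom_comp_table:
  "ra_comp {At_b} {At_b} = {Ident, At_a}"
  "ra_comp {At_c} {At_c} = {Ident, At_a}"
  "ra_comp {At_b} {At_c} = {At_a}"
  "ra_comp {At_c} {At_b} = {At_a}"
  "ra_comp {At_a} {At_a} = UNIV"
proof -
  show "ra_comp {At_a} {At_a} = UNIV"
  proof (rule set_eqI)
    show "z \<in> ra_comp {At_a} {At_a} \<longleftrightarrow> z \<in> UNIV" for z
      by (cases z) (auto simp: ra_comp_def atom_comp_def diversity_def cycle_ok_def)
  qed
qed (auto simp: ra_comp_def atom_comp_def diversity_def cycle_ok_def)

locale realisation_32_65 =
  fixes U :: "'u set" and A B C :: "('u \<times> 'u) set"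
  assumes partition: "U \<times> U = Id_on U \<union> A \<union> B \<union> C"
    and disjoint: "Id_on U \<inter> A = {}" "Id_on U \<inter> B = {}" "Id_on U \<inter> C = {}"
      "A \<inter> B = {}" "A \<inter> C = {}" "B \<inter> C = {}"
    and sym: "sym A" "sym B" "sym C"
    and comp_BB: "B O B = Id_on U \<union> A"
    and comp_CC: "C O C = Id_on U \<union> A"
    and comp_BC: "B O C = A"
    and comp_CB: "C O B = A"
    and comp_AA: "A O A = U \<times> U"

lemma realisation_32_65_of_representation:
  assumes h: "representation U h"
  shows "realisation_32_65 U (h {At_a}) (h {At_b}) (h {At_c})"
proof
  have one: "h {Ident} = Id_on U"
    using h unfolding representation_def ra_one_def by blast
  have comp: "h (ra_comp X Y) = h X O h Y" for X Y
    using h unfolding representation_def by blast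
  have disj: "h {x} \<inter> h {y} = {}" if "x \<noteq> y" for x y
    using representation_disjoint[OF h] that by simp
  have Id_A: "h {Ident, At_a} = Id_on U \<union> h {At_a}"
    using representation_Un[OF h, of "{Ident}" "{At_a}"] one by (simp add: insert_commute)
  have "UNIV = {Ident} \<union> {At_a} \<union> {At_b} \<union> {At_c}"
    using atom.exhaust by blast
  then show "U \<times> U = Id_on U \<union> h {At_a} \<union> h {At_b} \<union> h {At_c}"
    by (metis representation_UNIV[OF h] representation_Un[OF h] one)
  show "Id_on U \<inter> h {At_a} = {}" "Id_on U \<inter> h {At_b} = {}" "Id_on U \<inter> h {At_c} = {}"
    "h {At_a} \<inter> h {At_b} = {}" "h {At_a} \<inter> h {At_c} = {}" "h {At_b} \<inter> h {At_c} = {}"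
    by (simp_all add: disj flip: one)
  show "sym (h {At_a})" "sym (h {At_b})" "sym (h {At_c})"
    using representation_sym[OF h] by blast+
  show "h {At_b} O h {At_b} = Id_on U \<union> h {At_a}" "h {At_c} O h {At_c} = Id_on U \<union> h {At_a}"
    "h {At_b} O h {At_c} = h {At_a}" "h {At_c} O h {At_b} = h {At_a}"
    "h {At_a} O h {At_a} = U \<times> U"
    by (simp_all flip: comp add: atom_comp_table Id_A representation_UNIV[OF h])
qed

context realisation_32_65
begin

lemma subset_U: "A \<subseteq> U \<times> U" "B \<subseteq> U \<times> U" "C \<subseteq> U \<times> U"
  using partition by blast+

lemma irrefl: "(p, p) \<notin> A" "(p, p) \<notin> B" "(p, p) \<notin> C"
  using subset_U disjoint by blast+

lemma sym_BC: "(p, q) \<in> B \<union> C \<Longrightarrow> (q, p) \<in> B \<union> C"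
  using sym by (auto dest: symD)

lemma triangle_free:
  assumes "(p, q) \<in> B \<union> C" and "(q, r) \<in> B \<union> C"
  shows "(p, r) \<notin> B \<union> C"
proof -
  have "(p, r) \<in> Id_on U \<union> A"
    using assms comp_BB comp_CC comp_BC comp_CB by blast
  then show ?thesis
    using disjoint by blast
qed

definition common_neighbours :: "'u \<Rightarrow> 'u \<Rightarrow> 'u set" where
  "common_neighbours p q = {w. (p, w) \<in> B \<union> C \<and> (w, q) \<in> B \<union> C}"

lemma common_neighbours_subset: "common_neighbours p q \<subseteq> U"
  unfolding common_neighbours_def using subset_U by blast

lemma card_common_neighbours:
  assumes "finite U" and "(p, q) \<in> A"
  shows "4 \<le> card (common_neighbours p q)"
proof -
  obtain w1 where w1: "(p, w1) \<in> B" "(w1, q) \<in> B" using assms(2) comp_BB by blast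
  obtain w2 where w2: "(p, w2) \<in> C" "(w2, q) \<in> C" using assms(2) comp_CC by blast
  obtain w3 where w3: "(p, w3) \<in> B" "(w3, q) \<in> C" using assms(2) comp_BC by blast
  obtain w4 where w4: "(p, w4) \<in> C" "(w4, q) \<in> B" using assms(2) comp_CB by blast
  have "distinct [w1, w2, w3, w4]"
    using w1 w2 w3 w4 disjoint(6) by auto
  then have "card {w1, w2, w3, w4} = 4"
    by simp
  moreover have "{w1, w2, w3, w4} \<subseteq> common_neighbours p q"
    unfolding common_neighbours_def using w1 w2 w3 w4 by blast
  ultimately show ?thesis
    using card_mono[OF finite_subset[OF common_neighbours_subset assms(1)]] by metis
qed

lemma card_ge_11_if_A_A_B:
  assumes "finite U" and xz: "(x, z) \<in> A" and xz': "(x, z') \<in> A" and zz': "(z, z') \<in> B"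
  shows "11 \<le> card U"
proof -
  let ?N = "common_neighbours x z" and ?N' = "common_neighbours x z'"
  have fin: "finite ?N" "finite ?N'"
    using finite_subset[OF common_neighbours_subset assms(1)] by blast+
  have "?N \<inter> ?N' = {}"
    using triangle_free sym_BC zz' unfolding common_neighbours_def by blast
  moreover have "{x, z, z'} \<inter> (?N \<union> ?N') = {}"
    using xz xz' irrefl disjoint unfolding common_neighbours_def by blast
  moreover have "x \<noteq> z" "x \<noteq> z'" "z \<noteq> z'"
    using xz xz' zz' irrefl by metis+
  ultimately have "card ({x, z, z'} \<union> ?N \<union> ?N') = 3 + card ?N + card ?N'"
    using fin by (simp add: card_Un_disjoint Int_Un_distrib Un_assoc)
  also have "\<dots> \<ge> 11"
    using card_common_neighbours[OF assms(1) xz] card_common_neighbours[OF assms(1) xz']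
    by linarith
  finally have "11 \<le> card ({x, z, z'} \<union> ?N \<union> ?N')" .
  moreover have "{x, z, z'} \<union> ?N \<union> ?N' \<subseteq> U"
    using xz xz' subset_U common_neighbours_subset by blast
  ultimately show ?thesis
    using card_mono[OF assms(1)] by (meson order_trans)
qed

lemma A_B_neighbours_adjacent:
  assumes "finite U" and "card U < 11" and pw: "(p, w) \<in> A" and wu: "(w, u) \<in> B"
  shows "(p, u) \<in> B \<union> C"
proof -
  have "(p, u) \<in> Id_on U \<union> A \<union> B \<union> C"
    using pw wu subset_U partition by blast
  moreover have "(w, p) \<in> A"
    using sym(1) pw by (rule symD)
  then have "p \<noteq> u"
    using wu disjoint(4) by blast
  moreover have "(p, u) \<notin> A"
  proof
    assume "(p, u) \<in> A"
    from card_ge_11_if_A_A_B[OF assms(1) pw this wu] show False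
      using assms(2) by simp
  qed
  ultimately show ?thesis
    by blast
qed

lemma card_ge_11:
  assumes "finite U" and "U \<noteq> {}"
  shows "11 \<le> card U"
proof (rule ccontr)
  assume small: "\<not> 11 \<le> card U"
  obtain x where "x \<in> U" using assms(2) by blast
  then obtain y where xy: "(x, y) \<in> B" using comp_BB by blast
  then obtain w where xw: "(x, w) \<in> A" and wy: "(w, y) \<in> A"
    using comp_AA subset_U by blast
  obtain u where wu: "(w, u) \<in> B"
    using xw subset_U comp_BB by blast
  have yw: "(y, w) \<in> A"
    using sym(1) wy by (rule symD)
  have "(x, u) \<in> B \<union> C" "(y, u) \<in> B \<union> C"
    using A_B_neighbours_adjacent[OF assms(1) _ _ wu] small xw yw by simp_all
  then show False
    using triangle_free sym_BC xy by blast
qed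

end

theorem mainTheorem4:
  fixes U :: "'u set"
  assumes "representable_over U" and "finite U"
  shows "card U \<ge> 11"
proof -
  obtain h where h: "representation U h"
    using assms(1) unfolding representable_over_def by blast
  show ?thesis
    using realisation_32_65.card_ge_11[OF realisation_32_65_of_representation[OF h] assms(2)]
      representation_nonempty[OF h] by blast
qed

end
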